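(* Let $D$ be a dissection of the unit square $[0,1]^2$ into $n$ triangles. Then there exists a dissection $D'$ of the unit square into $n+2$ triangles with $\mathcal{R}(D')=\frac{n}{n+2}\mathcal{R}(D)$ and $\mathrm{RMS}(D')=\bigl(\frac{n}{n+2}\bigr)^{3/2}\mathrm{RMS}(D)$.
   Context: A dissection of a polygon $P$ of area $E$ is a finite set of triangles with disjoint interiors whose union is $P$. If its triangles have areas $a_1,\dots,a_n$, the range is $\mathcal{R}(D)=\max_{i,j}|a_i-a_j|$ and $\mathrm{RMS}(D)=\sqrt{\frac1n\sum_{i=1}^n(a_i-E/n)^2}$. *)

theory Defs
  imports "HOL-Analysis.Analysis"
begin

definition triangle :: "(real \<times> real) set \<Rightarrow> bool" where
  "triangle T \<longleftrightarrow> (\<exists>a b c. \<not> collinear {a, b, c} \<and> T = convex hull {a, b, c})"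

definition area :: "(real \<times> real) set \<Rightarrow> real" where
  "area S = measure lebesgue S"

definition dissection :: "(real \<times> real) set \<Rightarrow> (real \<times> real) set set \<Rightarrow> bool" where
  "dissection P D \<longleftrightarrow> finite D \<and> (\<forall>T\<in>D. triangle T)
     \<and> (\<forall>T\<in>D. \<forall>T'\<in>D. T \<noteq> T' \<longrightarrow> interior T \<inter> interior T' = {})
     \<and> \<Union>D = P"

definition unit_square :: "(real \<times> real) set" where
  "unit_square = {0..1} \<times> {0..1}"

definition range_diss :: "(real \<times> real) set set \<Rightarrow> real" where
  "range_diss D = Max {\<bar>area T - area T'\<bar> | T T'. T \<in> D \<and> T' \<in> D}"

definition rms_diss :: "(real \<times> real) set \<Rightarrow> (real \<times> real) set set \<Rightarrow> real" where
  "rms_diss P D = sqrt ((1 / real (card D)) *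
     (\<Sum>T\<in>D. (area T - area P / real (card D))\<^sup>2))"

end

theory Submission
  imports Defs
begin

(*
  Squeeze the given dissection vertically by the factor h = n/(n+2) into the strip
  [0,1] x [0,h] and cut the remaining strip [0,1] x [h,1] along a diagonal into two
  triangles of area (1-h)/2 = 1/(n+2).  Squeezing multiplies every area, and the mean
  area 1/n, by h; the two new triangles have exactly the new mean area h/n = 1/(n+2).
  They therefore leave the maximum and the minimum area alone (the mean lies between
  them) and add nothing to the squared deviations from the mean.  So the range scales
  by h, and the RMS by sqrt (h^2 * n/(n+2)) = h^(3/2).
*)

lemma triangle_compact: "triangle T \<Longrightarrow> compact T"
  unfolding triangle_def by (auto intro: finite_imp_compact_convex_hull)

lemma triangle_convex: "triangle T \<Longrightarrow> convex T"
  unfolding triangle_def by auto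

lemma triangle_interior_nonempty: "triangle T \<Longrightarrow> interior T \<noteq> {}"
proof -
  assume "triangle T"
  then obtain a b c where nc: "\<not> collinear {a, b, c}" and T: "T = convex hull {a, b, c}"
    unfolding triangle_def by blast
  have indep: "\<not> affine_dependent {a, b, c}" and "card {a, b, c} = 3"
    using nc by (auto simp: collinear_3_eq_affine_dependent)
  then have "aff_dim T = DIM(real \<times> real)"
    using aff_dim_affine_independent[OF indep] unfolding T by (simp add: aff_dim_convex_hull)
  then have "affine hull T = UNIV"
    using aff_dim_eq_full by blast
  then have "rel_interior T = interior T"
    by (rule rel_interior_interior)
  moreover have "rel_interior T \<noteq> {}"
    using T by (simp add: rel_interior_eq_empty convex_convex_hull)
  ultimately show ?thesis by simp
qed

lemma triangle_affine_image:
  fixes g :: "real \<times> real \<Rightarrow> real \<times> real"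
  assumes g: "linear g" "inj g" and "triangle T"
  shows "triangle ((\<lambda>x. a + g x) ` T)"
proof -
  obtain p q r where nc: "\<not> collinear {p, q, r}" and T: "T = convex hull {p, q, r}"
    using \<open>triangle T\<close> unfolding triangle_def by blast
  let ?f = "\<lambda>x. a + g x"
  have img: "?f ` S = (\<lambda>x. a + x) ` (g ` S)" for S
    by (simp add: image_image)
  have "?f ` T = convex hull {?f p, ?f q, ?f r}"
    unfolding T img convex_hull_linear_image[OF g(1)] convex_hull_translation[symmetric] by simp
  moreover have "\<not> collinear {?f p, ?f q, ?f r}"
  proof -
    have "{?f p, ?f q, ?f r} = (+) a ` (g ` {p, q, r})"
      by simp
    then have "aff_dim {?f p, ?f q, ?f r} = aff_dim {p, q, r}"
      using g by (simp only: aff_dim_translation_eq aff_dim_injective_linear_image)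
    then show ?thesis
      using nc by (simp add: collinear_aff_dim)
  qed
  ultimately show ?thesis
    unfolding triangle_def by blast
qed

lemma dissection_affine_image:
  fixes g :: "real \<times> real \<Rightarrow> real \<times> real"
  assumes D: "dissection P D" and g: "linear g" "inj g"
  shows "dissection ((\<lambda>x. a + g x) ` P) ((`) (\<lambda>x. a + g x) ` D)"
proof -
  let ?f = "\<lambda>x. a + g x"
  have inj: "inj ?f"
    using g(2) by (simp add: inj_def)
  have int: "interior (?f ` S) = ?f ` interior S" for S
    using interior_translation[of a "g ` S"] interior_injective_linear_image[OF g]
    by (simp add: image_image)
  show ?thesis
    using D triangle_affine_image[OF g]
    by (auto simp: dissection_def int image_Int[OF inj, symmetric] inj_image_eq_iff[OF inj])
qed

lemma dissection_Un:
  assumes D: "dissection P D" and E: "dissection Q E" and PQ: "interior P \<inter> interior Q = {}"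
  shows "dissection (P \<union> Q) (D \<union> E)" and "D \<inter> E = {}"
proof -
  have intD: "interior T \<subseteq> interior P" if "T \<in> D" for T
    using D that by (auto simp: dissection_def intro!: interior_mono)
  have intE: "interior T \<subseteq> interior Q" if "T \<in> E" for T
    using E that by (auto simp: dissection_def intro!: interior_mono)
  have "interior T \<inter> interior T' = {}" if "T \<in> D" "T' \<in> E" for T T'
    using intD[OF that(1)] intE[OF that(2)] PQ by blast
  then show "dissection (P \<union> Q) (D \<union> E)"
    using D E unfolding dissection_def by (metis Int_commute Un_iff Union_Un_distrib finite_UnI)
  show "D \<inter> E = {}"
  proof (rule ccontr)
    assume "D \<inter> E \<noteq> {}"
    then obtain T where "T \<in> D" "T \<in> E" by blast
    then have "interior T = {}"
      using intD intE PQ by blast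
    moreover have "triangle T"
      using D \<open>T \<in> D\<close> by (simp add: dissection_def)
    ultimately show False
      using triangle_interior_nonempty by blast
  qed
qed

lemma dissection_area_sum:
  assumes "dissection P D"
  shows "(\<Sum>T\<in>D. area T) = area P"
proof -
  have fin: "finite D" and tri: "\<And>T. T \<in> D \<Longrightarrow> triangle T" and P: "\<Union>D = P"
    using assms by (auto simp: dissection_def)
  have "negligible (S \<inter> T)" if "S \<in> D" "T \<in> D" "S \<noteq> T" for S T
  proof -
    have "interior S \<inter> interior T = {}"
      using assms that by (auto simp: dissection_def)
    then have "S \<inter> T \<subseteq> frontier S \<union> frontier T"
      using that compact_imp_closed[OF triangle_compact[OF tri]] by (auto simp: frontier_def)
    then show ?thesis
      using that tri
      by (meson negligible_Un negligible_convex_frontier negligible_subset triangle_convex)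
  qed
  then have "measure lebesgue (\<Union>D) = (\<Sum>T\<in>D. measure lebesgue T)"
    using fin tri by (intro measure_negligible_finite_Union)
      (auto simp: pairwise_def lmeasurable_compact triangle_compact)
  then show ?thesis
    by (simp add: area_def P)
qed

definition axis_affine :: "real \<times> real \<Rightarrow> real \<Rightarrow> real \<Rightarrow> real \<times> real \<Rightarrow> real \<times> real" where
  "axis_affine c s t p = (fst c + s * fst p, snd c + t * snd p)"

lemma axis_affine_eq_translate_linear:
  "axis_affine c s t = (\<lambda>x. c + (\<lambda>p. (s * fst p, t * snd p)) x)"
  by (simp add: axis_affine_def fun_eq_iff prod_eq_iff)

lemma linear_axis_scale: "linear (\<lambda>p :: real \<times> real. (s * fst p, t * snd p))"
  by (rule linearI) (auto simp: algebra_simps)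

lemma inj_axis_scale: "s \<noteq> 0 \<Longrightarrow> t \<noteq> 0 \<Longrightarrow> inj (\<lambda>p :: real \<times> real. (s * fst p, t * snd p))"
  by (auto simp: inj_def prod_eq_iff)

lemma inj_axis_affine: "s \<noteq> 0 \<Longrightarrow> t \<noteq> 0 \<Longrightarrow> inj (axis_affine c s t)"
  unfolding axis_affine_def by (auto simp: inj_def prod_eq_iff)

lemma inj_on_image_axis_affine: "s \<noteq> 0 \<Longrightarrow> t \<noteq> 0 \<Longrightarrow> inj_on ((`) (axis_affine c s t)) X"
  by (meson inj_axis_affine inj_on_image inj_on_subset subset_UNIV)

lemma dissection_axis_affine:
  assumes "dissection P D" "s \<noteq> 0" "t \<noteq> 0"
  shows "dissection (axis_affine c s t ` P) ((`) (axis_affine c s t) ` D)"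
  unfolding axis_affine_eq_translate_linear
  using assms by (intro dissection_affine_image linear_axis_scale inj_axis_scale)

lemma area_axis_affine:
  assumes S: "S \<in> sets borel" and st: "s \<noteq> 0" "t \<noteq> 0"
  shows "area (axis_affine c s t ` S) = \<bar>s * t\<bar> * area S"
proof -
  let ?f = "axis_affine c s t"
  let ?g = "axis_affine (- fst c / s, - snd c / t) (1 / s) (1 / t)"
  have f_eq: "?f = (\<lambda>x. c + (\<Sum>j\<in>Basis. ((if j = (0, 1) then t else s) * (x \<bullet> j)) *\<^sub>R j))"
    by (simp add: axis_affine_def fun_eq_iff prod_eq_iff Basis_prod_def inner_prod_def)
  have lborel: "lborel = density (distr lborel borel ?f) (\<lambda>_. ennreal \<bar>s * t\<bar>)"
    unfolding f_eq using lborel_affine_euclidean[of "\<lambda>j. if j = (0, 1) then t else s" c] st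
    by (simp add: Basis_prod_def abs_mult mult.commute)
  have f_meas: "?f \<in> borel_measurable borel" and g_meas: "?g \<in> borel_measurable borel"
    unfolding axis_affine_def by (intro borel_measurable_continuous_onI continuous_intros)+
  have gf: "?g (?f p) = p" and fg: "?f (?g p) = p" for p
    using st by (simp_all add: axis_affine_def field_simps)
  have "?f ` S = ?g -` S"
  proof (intro set_eqI iffI)
    fix p assume "p \<in> ?f ` S"
    then show "p \<in> ?g -` S"
      using gf by auto
  next
    fix p assume "p \<in> ?g -` S"
    then have "?f (?g p) \<in> ?f ` S"
      by blast
    then show "p \<in> ?f ` S"
      by (simp only: fg)
  qed
  then have fS: "?f ` S \<in> sets borel"
    using measurable_sets[OF g_meas S] by simp
  have "?f -` (?f ` S) = S"
    using inj_axis_affine[OF st] by (rule inj_vimage_image_eq)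
  then have "emeasure lborel (?f ` S) = ennreal \<bar>s * t\<bar> * emeasure lborel S"
    using fS f_meas
    by (subst lborel) (simp add: emeasure_density emeasure_distr nn_integral_cmult_indicator)
  then show ?thesis
    using S fS by (simp add: area_def measure_def enn2real_mult)
qed

lemma area_axis_affine_triangle:
  "triangle T \<Longrightarrow> s \<noteq> 0 \<Longrightarrow> t \<noteq> 0 \<Longrightarrow> area (axis_affine c s t ` T) = \<bar>s * t\<bar> * area T"
  by (simp add: area_axis_affine borel_compact triangle_compact)

lemma axis_affine_unit_square:
  assumes "s > 0" "t > 0"
  shows "axis_affine c s t ` unit_square = {fst c .. fst c + s} \<times> {snd c .. snd c + t}"
proof (intro set_eqI iffI)
  fix p assume "p \<in> axis_affine c s t ` unit_square"
  then obtain x y where xy: "x \<in> {0..1}" "y \<in> {0..1}" and p: "p = axis_affine c s t (x, y)"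
    by (auto simp: unit_square_def)
  have "0 \<le> s * x" "s * x \<le> s" "0 \<le> t * y" "t * y \<le> t"
    using assms xy by (simp_all add: mult_left_le)
  then show "p \<in> {fst c .. fst c + s} \<times> {snd c .. snd c + t}"
    by (simp add: p axis_affine_def)
next
  fix p assume "p \<in> {fst c .. fst c + s} \<times> {snd c .. snd c + t}"
  then have "((fst p - fst c) / s, (snd p - snd c) / t) \<in> unit_square"
    using assms by (auto simp: unit_square_def field_simps)
  moreover have "p = axis_affine c s t ((fst p - fst c) / s, (snd p - snd c) / t)"
    using assms by (simp add: axis_affine_def)
  ultimately show "p \<in> axis_affine c s t ` unit_square"
    by blast
qed

lemma area_unit_square: "area unit_square = 1"
proof -
  have square: "unit_square = cbox (0, 0) (1, 1)"
    by (simp add: unit_square_def cbox_Pair_eq)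
  show ?thesis
    unfolding area_def square by (simp add: content_Pair)
qed

definition lower_triangle :: "(real \<times> real) set" where
  "lower_triangle = convex hull {(0, 0), (1, 0), (0, 1)}"

definition upper_triangle :: "(real \<times> real) set" where
  "upper_triangle = axis_affine (1, 1) (-1) (-1) ` lower_triangle"

lemma lower_triangle_eq: "lower_triangle = {(x, y). 0 \<le> x \<and> 0 \<le> y \<and> x + y \<le> 1}"
proof (intro set_eqI iffI)
  fix p assume "p \<in> lower_triangle"
  then obtain u v w :: real where "0 \<le> v" "0 \<le> w" "0 \<le> u" "u + v + w = 1" "p = (v, w)"
    unfolding lower_triangle_def convex_hull_3 by auto
  then show "p \<in> {(x, y). 0 \<le> x \<and> 0 \<le> y \<and> x + y \<le> 1}"
    by auto
next
  fix p :: "real \<times> real" assume "p \<in> {(x, y). 0 \<le> x \<and> 0 \<le> y \<and> x + y \<le> 1}"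
  then obtain x y where "p = (x, y)" "0 \<le> x" "0 \<le> y" "x + y \<le> 1"
    by auto
  then have "p = (1 - x - y) *\<^sub>R (0, 0) + x *\<^sub>R (1, 0) + y *\<^sub>R (0, 1) \<and> 0 \<le> 1 - x - y"
    by simp
  then show "p \<in> lower_triangle"
    unfolding lower_triangle_def convex_hull_3 using \<open>0 \<le> x\<close> \<open>0 \<le> y\<close>
    by (intro CollectI exI[of _ "1 - x - y"] exI[of _ x] exI[of _ y]) auto
qed

lemma upper_triangle_eq: "upper_triangle = {(x, y). x \<le> 1 \<and> y \<le> 1 \<and> 1 \<le> x + y}"
proof -
  let ?r = "\<lambda>p :: real \<times> real. (1 - fst p, 1 - snd p)"
  have "upper_triangle = ?r ` lower_triangle"
    unfolding upper_triangle_def axis_affine_def by simp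
  also have "\<dots> = ?r -` lower_triangle"
  proof -
    have "p \<in> ?r ` lower_triangle \<longleftrightarrow> ?r p \<in> lower_triangle" for p
    proof
      assume "p \<in> ?r ` lower_triangle"
      then show "?r p \<in> lower_triangle"
        by auto
    next
      assume "?r p \<in> lower_triangle"
      then have "?r (?r p) \<in> ?r ` lower_triangle"
        by (rule imageI)
      then show "p \<in> ?r ` lower_triangle"
        by simp
    qed
    then show ?thesis
      by blast
  qed
  also have "\<dots> = {(x, y). x \<le> 1 \<and> y \<le> 1 \<and> 1 \<le> x + y}"
    by (auto simp: lower_triangle_eq)
  finally show ?thesis .
qed

lemma triangle_lower_triangle: "triangle lower_triangle"
proof -
  have "\<not> collinear {0, (1, 0), (0 :: real, 1 :: real)}"
    unfolding collinear_lemma by (auto simp: zero_prod_def)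
  then show ?thesis
    unfolding triangle_def lower_triangle_def zero_prod_def by blast
qed

lemma triangle_upper_triangle: "triangle upper_triangle"
  unfolding upper_triangle_def axis_affine_eq_translate_linear
  by (intro triangle_affine_image linear_axis_scale inj_axis_scale triangle_lower_triangle) simp_all

lemma lower_triangle_ne_upper_triangle: "lower_triangle \<noteq> upper_triangle"
proof -
  have "(0, 0) \<in> lower_triangle" "(0, 0) \<notin> upper_triangle"
    by (simp_all add: lower_triangle_eq upper_triangle_eq)
  then show ?thesis
    by blast
qed

lemma dissection_unit_square_diagonal: "dissection unit_square {lower_triangle, upper_triangle}"
proof -
  have "lower_triangle \<subseteq> {p. (1, 1) \<bullet> p \<le> 1}" "upper_triangle \<subseteq> {p. (1, 1) \<bullet> p \<ge> 1}"
    by (auto simp: lower_triangle_eq upper_triangle_eq inner_prod_def)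
  then have "interior lower_triangle \<subseteq> {p. (1, 1) \<bullet> p < 1}"
    "interior upper_triangle \<subseteq> {p. (1, 1) \<bullet> p > 1}"
    by (metis interior_mono interior_halfspace_le interior_halfspace_ge zero_neq_one
        prod.inject zero_prod_def)+
  then have "interior lower_triangle \<inter> interior upper_triangle = {}"
    by fastforce
  moreover have "lower_triangle \<union> upper_triangle = unit_square"
  proof (intro set_eqI iffI)
    fix p :: "real \<times> real" assume "p \<in> lower_triangle \<union> upper_triangle"
    then show "p \<in> unit_square"
      by (cases p) (auto simp: lower_triangle_eq upper_triangle_eq unit_square_def)
  next
    fix p :: "real \<times> real" assume "p \<in> unit_square"
    then show "p \<in> lower_triangle \<union> upper_triangle"
      by (cases p, cases "fst p + snd p \<le> 1")
        (auto simp: lower_triangle_eq upper_triangle_eq unit_square_def)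
  qed
  ultimately show ?thesis
    unfolding dissection_def using triangle_lower_triangle triangle_upper_triangle
    by (auto simp: Int_commute)
qed

lemma area_diagonal_triangles: "area lower_triangle = 1 / 2" "area upper_triangle = 1 / 2"
proof -
  have "area upper_triangle = area lower_triangle"
    unfolding upper_triangle_def
    by (simp add: area_axis_affine_triangle triangle_lower_triangle)
  moreover have "area lower_triangle + area upper_triangle = 1"
    using dissection_area_sum[OF dissection_unit_square_diagonal]
    by (simp add: area_unit_square lower_triangle_ne_upper_triangle)
  ultimately show "area lower_triangle = 1 / 2" "area upper_triangle = 1 / 2"
    by simp_all
qed

abbreviation squeeze_bottom :: "real \<Rightarrow> real \<times> real \<Rightarrow> real \<times> real" where
  "squeeze_bottom h \<equiv> axis_affine (0, 0) 1 h"

abbreviation squeeze_top :: "real \<Rightarrow> real \<times> real \<Rightarrow> real \<times> real" where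
  "squeeze_top h \<equiv> axis_affine (0, h) 1 (1 - h)"

definition squeeze_dissection :: "real \<Rightarrow> (real \<times> real) set set \<Rightarrow> (real \<times> real) set set" where
  "squeeze_dissection h D =
     (`) (squeeze_bottom h) ` D \<union> (`) (squeeze_top h) ` {lower_triangle, upper_triangle}"

lemma
  assumes D: "dissection unit_square D" and h: "0 < h" "h < 1"
  shows dissection_squeeze_dissection: "dissection unit_square (squeeze_dissection h D)"
    and squeeze_dissection_disjoint:
      "(`) (squeeze_bottom h) ` D \<inter> (`) (squeeze_top h) ` {lower_triangle, upper_triangle} = {}"
proof -
  have bottom: "dissection ({0..1} \<times> {0..h}) ((`) (squeeze_bottom h) ` D)"
    using dissection_axis_affine[OF D, where c = "(0, 0)" and s = 1 and t = h]
      axis_affine_unit_square[where c = "(0, 0)" and s = 1 and t = h] h by simp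
  have top: "dissection ({0..1} \<times> {h..1}) ((`) (squeeze_top h) ` {lower_triangle, upper_triangle})"
    using dissection_axis_affine[OF dissection_unit_square_diagonal,
        where c = "(0, h)" and s = 1 and t = "1 - h"]
      axis_affine_unit_square[where c = "(0, h)" and s = 1 and t = "1 - h"] h by simp
  have "interior ({0..1} \<times> {0..h}) \<inter> interior ({0..1} \<times> {h..1 :: real}) = {}"
    by (auto simp: interior_Times)
  moreover have "{0..1} \<times> {0..h} \<union> {0..1} \<times> {h..1} = unit_square"
    using h by (auto simp: unit_square_def)
  ultimately show "dissection unit_square (squeeze_dissection h D)"
    and "(`) (squeeze_bottom h) ` D \<inter> (`) (squeeze_top h) ` {lower_triangle, upper_triangle} = {}"
    using dissection_Un[OF bottom top] unfolding squeeze_dissection_def by metis+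
qed

lemma top_triangles_distinct:
  "h < 1 \<Longrightarrow> squeeze_top h ` lower_triangle \<noteq> squeeze_top h ` upper_triangle"
proof -
  assume "h < 1"
  then have "inj (squeeze_top h)"
    by (intro inj_axis_affine) simp_all
  then show ?thesis
    using lower_triangle_ne_upper_triangle by (simp only: inj_image_eq_iff not_False_eq_True)
qed

lemma card_squeeze_dissection:
  assumes D: "dissection unit_square D" and h: "0 < h" "h < 1"
  shows "card (squeeze_dissection h D) = card D + 2"
proof -
  have "finite D"
    using D by (simp add: dissection_def)
  moreover have "card ((`) (squeeze_bottom h) ` D) = card D"
    using h by (simp add: card_image inj_on_image_axis_affine)
  ultimately show ?thesis
    unfolding squeeze_dissection_def using top_triangles_distinct[OF h(2)]
    by (subst card_Un_disjoint[OF _ _ squeeze_dissection_disjoint[OF assms]]) simp_all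
qed

lemma area_top_triangles:
  assumes "h < 1"
  shows "area (squeeze_top h ` lower_triangle) = (1 - h) / 2"
    and "area (squeeze_top h ` upper_triangle) = (1 - h) / 2"
  using assms by (simp_all add: area_axis_affine_triangle triangle_lower_triangle
      triangle_upper_triangle area_diagonal_triangles)

lemma area_image_squeeze_dissection:
  assumes D: "dissection unit_square D" and h: "0 < h" "h < 1"
  shows "area ` squeeze_dissection h D = insert ((1 - h) / 2) ((*) h ` area ` D)"
proof -
  have "area (squeeze_bottom h ` T) = h * area T" if "T \<in> D" for T
    using D that h by (simp add: dissection_def area_axis_affine_triangle)
  then show ?thesis
    unfolding squeeze_dissection_def using area_top_triangles[OF h(2)]
    by (auto simp: image_image image_Un)
qed

lemma sum_area_squeeze_dissection:
  fixes f :: "real \<Rightarrow> real"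
  assumes D: "dissection unit_square D" and h: "0 < h" "h < 1"
  shows "(\<Sum>T\<in>squeeze_dissection h D. f (area T))
    = (\<Sum>T\<in>D. f (h * area T)) + 2 * f ((1 - h) / 2)"
proof -
  have fin: "finite D"
    using D by (simp add: dissection_def)
  have "(\<Sum>T\<in>(`) (squeeze_bottom h) ` D. f (area T))
      = (\<Sum>T\<in>D. f (area (squeeze_bottom h ` T)))"
    using h by (simp add: sum.reindex inj_on_image_axis_affine)
  also have "\<dots> = (\<Sum>T\<in>D. f (h * area T))"
    using D h by (intro sum.cong) (simp_all add: dissection_def area_axis_affine_triangle)
  finally have "(\<Sum>T\<in>(`) (squeeze_bottom h) ` D. f (area T)) = (\<Sum>T\<in>D. f (h * area T))" .
  moreover have
    "(\<Sum>T\<in>(`) (squeeze_top h) ` {lower_triangle, upper_triangle}. f (area T)) = 2 * f ((1 - h) / 2)"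
    using top_triangles_distinct[OF h(2)] by (simp add: area_top_triangles[OF h(2)])
  ultimately show ?thesis
    unfolding squeeze_dissection_def using fin
    by (subst sum.union_disjoint[OF _ _ squeeze_dissection_disjoint[OF assms]]) simp_all
qed

lemma card_dissection_unit_square_pos:
  assumes "dissection unit_square D"
  shows "0 < card D"
proof -
  have "(0, 0) \<in> \<Union>D"
    using assms by (simp add: dissection_def unit_square_def)
  then show ?thesis
    using assms by (auto simp: dissection_def card_gt_0_iff)
qed

lemma
  fixes f :: "'a \<Rightarrow> real"
  assumes "finite A" "A \<noteq> {}"
  shows Min_le_mean: "Min (f ` A) \<le> sum f A / card A"
    and mean_le_Max: "sum f A / card A \<le> Max (f ` A)"
proof -
  have "card A * Min (f ` A) \<le> sum f A" "sum f A \<le> card A * Max (f ` A)"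
    using assms by (simp_all add: sum_bounded_below sum_bounded_above)
  moreover have "0 < real (card A)"
    using assms by (simp add: card_gt_0_iff)
  ultimately show "Min (f ` A) \<le> sum f A / card A" "sum f A / card A \<le> Max (f ` A)"
    by (simp_all add: pos_le_divide_eq pos_divide_le_eq mult.commute)
qed

lemma Max_Min_diff_insert_scaled:
  fixes A :: "real set"
  assumes A: "finite A" "A \<noteq> {}" and h: "0 \<le> h" and m: "Min A \<le> m" "m \<le> Max A"
  shows "Max (insert (h * m) ((*) h ` A)) - Min (insert (h * m) ((*) h ` A)) = h * (Max A - Min A)"
proof -
  have "mono ((*) h)"
    using h by (simp add: mono_def mult_left_mono)
  then have "Max ((*) h ` A) = h * Max A" "Min ((*) h ` A) = h * Min A"
    using A by (simp_all add: mono_Max_commute mono_Min_commute)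
  moreover have "h * m \<le> h * Max A" "h * Min A \<le> h * m"
    using h m by (simp_all add: mult_left_mono)
  ultimately show ?thesis
    using A by (simp add: right_diff_distrib)
qed

lemma range_diss_eq_Max_minus_Min:
  assumes "finite D" "D \<noteq> {}"
  shows "range_diss D = Max (area ` D) - Min (area ` D)"
  unfolding range_diss_def
proof (rule Max_eqI)
  have "{\<bar>area T - area T'\<bar> | T T'. T \<in> D \<and> T' \<in> D} = (\<lambda>(T, T'). \<bar>area T - area T'\<bar>) ` (D \<times> D)"
    by auto
  then show "finite {\<bar>area T - area T'\<bar> | T T'. T \<in> D \<and> T' \<in> D}"
    using assms by simp
  have fin: "finite (area ` D)" "area ` D \<noteq> {}"
    using assms by auto
  have bounds: "Min (area ` D) \<le> area T" "area T \<le> Max (area ` D)" if "T \<in> D" for T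
    using fin that by simp_all
  show "y \<le> Max (area ` D) - Min (area ` D)"
    if y: "y \<in> {\<bar>area T - area T'\<bar> | T T'. T \<in> D \<and> T' \<in> D}" for y
  proof -
    obtain T T' where "y = \<bar>area T - area T'\<bar>" "T \<in> D" "T' \<in> D"
      using y by blast
    then show ?thesis
      using bounds[of T] bounds[of T'] by linarith
  qed
  obtain T T' where T: "T \<in> D" "area T = Max (area ` D)" and T': "T' \<in> D" "area T' = Min (area ` D)"
    using Max_in[OF fin] Min_in[OF fin] by (metis imageE)
  then have "Max (area ` D) - Min (area ` D) = \<bar>area T - area T'\<bar>"
    using bounds[of T] by simp
  then show "Max (area ` D) - Min (area ` D) \<in> {\<bar>area T - area T'\<bar> | T T'. T \<in> D \<and> T' \<in> D}"
    using T(1) T'(1) by blast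
qed

lemma squeeze_ratio:
  assumes n: "1 \<le> n" and h: "h = real n / real (n + 2)"
  shows "0 < h" "h < 1" "h * (1 / real n) = 1 / real (n + 2)" "(1 - h) / 2 = 1 / real (n + 2)"
  using n unfolding h by (simp_all add: field_simps)

lemma sqrt_cube_eq_powr:
  fixes x :: real
  assumes "0 < x"
  shows "sqrt (x ^ 3) = x powr (3 / 2)"
proof -
  have "x ^ 3 = x powr 3"
    using powr_realpow[OF assms, of 3] by simp
  then have "sqrt (x ^ 3) = (x powr 3) powr (1 / 2)"
    using assms by (simp add: powr_half_sqrt)
  also have "\<dots> = x powr (3 / 2)"
    by (simp add: powr_powr)
  finally show ?thesis .
qed

lemma range_diss_squeeze_dissection:
  assumes D: "dissection unit_square D" and n: "card D = n" and h: "h = real n / real (n + 2)"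
  shows "range_diss (squeeze_dissection h D) = h * range_diss D"
proof -
  have "1 \<le> n"
    using card_dissection_unit_square_pos[OF D] n by simp
  note ratio = squeeze_ratio[OF this h]
  have fin: "finite D" "D \<noteq> {}"
    using D card_dissection_unit_square_pos[OF D] by (auto simp: dissection_def)
  have D': "dissection unit_square (squeeze_dissection h D)"
    by (rule dissection_squeeze_dissection[OF D ratio(1,2)])
  then have fin': "finite (squeeze_dissection h D)" "squeeze_dissection h D \<noteq> {}"
    using card_dissection_unit_square_pos[OF D'] by (auto simp: dissection_def)
  have mean: "sum area D / card D = 1 / n"
    using dissection_area_sum[OF D] by (simp add: area_unit_square n)
  have "area ` squeeze_dissection h D = insert (h * (1 / n)) ((*) h ` area ` D)"
    using area_image_squeeze_dissection[OF D ratio(1,2)] by (simp only: ratio(3,4))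
  then have "range_diss (squeeze_dissection h D) =
      Max (insert (h * (1 / n)) ((*) h ` area ` D)) - Min (insert (h * (1 / n)) ((*) h ` area ` D))"
    by (simp only: range_diss_eq_Max_minus_Min[OF fin'])
  also have "\<dots> = h * (Max (area ` D) - Min (area ` D))"
    using finite_imageI[OF fin(1)] fin(2) ratio(1)
      Min_le_mean[OF fin, of area] mean_le_Max[OF fin, of area]
    unfolding mean by (intro Max_Min_diff_insert_scaled) auto
  also have "\<dots> = h * range_diss D"
    by (simp only: range_diss_eq_Max_minus_Min[OF fin])
  finally show ?thesis .
qed

lemma rms_diss_squeeze_dissection:
  assumes D: "dissection unit_square D" and n: "card D = n" and h: "h = real n / real (n + 2)"
  shows "rms_diss unit_square (squeeze_dissection h D) = h powr (3 / 2) * rms_diss unit_square D"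
proof -
  have "1 \<le> n"
    using card_dissection_unit_square_pos[OF D] n by simp
  note ratio = squeeze_ratio[OF this h]
  define S where "S = (\<Sum>T\<in>D. (area T - 1 / n)\<^sup>2)"
  have shift: "h * a - 1 / real (n + 2) = h * (a - 1 / n)" for a
    unfolding ratio(3)[symmetric] by (simp add: right_diff_distrib)
  have "(\<Sum>T\<in>squeeze_dissection h D. (area T - 1 / real (n + 2))\<^sup>2)
      = (\<Sum>T\<in>D. (h * area T - 1 / real (n + 2))\<^sup>2) + 2 * ((1 - h) / 2 - 1 / real (n + 2))\<^sup>2"
    by (rule sum_area_squeeze_dissection[OF D ratio(1,2)])
  also have "\<dots> = h\<^sup>2 * S"
    unfolding shift ratio(4) S_def by (simp add: power_mult_distrib sum_distrib_left)
  finally have "rms_diss unit_square (squeeze_dissection h D) = sqrt (1 / real (n + 2) * (h\<^sup>2 * S))"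
    unfolding rms_diss_def card_squeeze_dissection[OF D ratio(1,2)] n area_unit_square by simp
  also have "1 / real (n + 2) * (h\<^sup>2 * S) = h ^ 3 * (S / n)"
    unfolding ratio(3)[symmetric] by (simp add: power2_eq_square power3_eq_cube)
  also have "sqrt (h ^ 3 * (S / n)) = sqrt (h ^ 3) * sqrt (S / n)"
    by (rule real_sqrt_mult)
  also have "sqrt (h ^ 3) = h powr (3 / 2)"
    by (rule sqrt_cube_eq_powr[OF ratio(1)])
  also have "sqrt (S / n) = rms_diss unit_square D"
    unfolding rms_diss_def S_def n area_unit_square by simp
  finally show ?thesis .
qed

theorem lemma7p1:
  fixes D :: "(real \<times> real) set set" and n :: nat
  assumes "dissection unit_square D" and "card D = n"
  shows "\<exists>D'. dissection unit_square D' \<and> card D' = n + 2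
           \<and> range_diss D' = (real n / real (n + 2)) * range_diss D
           \<and> rms_diss unit_square D' = (real n / real (n + 2)) powr (3/2) * rms_diss unit_square D"
proof -
  define h where "h = real n / real (n + 2)"
  have "1 \<le> n"
    using card_dissection_unit_square_pos[OF assms(1)] assms(2) by simp
  then have "0 < h" "h < 1"
    using squeeze_ratio h_def by simp_all
  then show ?thesis
    using assms dissection_squeeze_dissection card_squeeze_dissection
      range_diss_squeeze_dissection[OF assms h_def] rms_diss_squeeze_dissection[OF assms h_def]
    unfolding h_def[symmetric] by blast
qed

end
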